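(* Let $G$ be any GP 2 host graph in which every node is marked grey and is not a root and every edge is unmarked, with $n$ nodes and $m$ edges. When the GP 2 program is-connected is executed on $G$ (via the GP 2-to-C compiler, under the cost model below), it terminates in time $\mathrm{O}(n+m)$, i.e. linear in the size of $G$.
   Context: GP 2 semantics. Host graphs are finite directed graphs (parallel edges and loops allowed); every node and edge carries a label (a list of integers and strings) and a mark: nodes are unmarked or red, green, blue or grey; edges are unmarked or red, green, blue or dashed. Some nodes are roots. A rule consists of a left-hand graph $L$ and a right-hand graph $R$ sharing an interface of nodes; labels may contain variables; a rule item with mark "any" matches any mark. A rule is applied by finding an injective morphism from $L$ into the host graph compatible with labels and marks, mapping roots of $L$ to roots, satisfying the dangling condition and the rule's condition, then modifying the matched items as prescribed by $R$. Commands: a rule set call applies one applicable rule and fails if none applies; $P;Q$ is sequencing; $P!$ iterates $P$ until it fails (returning the graph on which $P$ was last entered; break exits the loop); "try $C$ then $P$ else $Q$" runs $C$ and continues with $P$ on its result if it succeeded, else runs $Q$ on the original graph; "if $C$ then $P$ else $Q$" runs $C$ on a copy then $P$ or $Q$ on the original; fail causes failure. Cost model (updated GP 2-to-C compiler). The generated code stores host nodes in separate linked lists per node mark, keeps a list of roots, and for each node stores a two-dimensional array of linked lists of incident edges indexed by edge mark (unmarked, dashed, red, green, blue) and orientation (incoming, outgoing, loop). Each of the following elementary operations takes constant time: fetch the first/next host node with a given mark; fetch the first/next root node; given a node, fetch the first/next incoming, outgoing or loop edge with a given mark; read in-degree, out-degree, mark, root status, source, target; set/clear/test a "matched" flag.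 Rule matching is a search using these operations; once a match is found, completing a rule application (for rules that only change marks, roots or add host labels) takes constant time. Running time is the total cost of all operations performed; the size of $G$ is $n+m$. The program is-connected (variables x,y,z of type list; labels unchanged by all rules): Main = try init then (DFS!; Check); DFS = FORWARD!; try back else break; FORWARD = next_edge; {move, ignore}; Check = if match then fail. Rule edges between nodes 1 and 2 match host edges in either direction. - init: a grey non-root node becomes a blue root. - match: a grey node; no change. - next_edge: blue root 1, node 2 of any mark, unmarked edge between them; edge becomes red. - ignore: blue root 1, blue node 2, red edge between; edge becomes blue. - move: blue root 1, grey node 2, red edge between; node 1 becomes a blue non-root, node 2 a blue root, edge dashed. - back: blue non-root 1, blue root 2, dashed edge between; node 1 becomes a root, node 2 a non-root (both blue), edge blue. *)

theory Defs
  imports Main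
begin

datatype atom = AInt int | AStr string
type_synonym label = "atom list"

datatype nmark = NUnmarked | NRed | NGreen | NBlue | NGrey
datatype emark = EUnmarked | EDashed | ERed | EGreen | EBlue

record hgraph =
  nodes :: "nat set"
  edges :: "nat set"
  src   :: "nat \<Rightarrow> nat"
  tgt   :: "nat \<Rightarrow> nat"
  nlab  :: "nat \<Rightarrow> label"
  elab  :: "nat \<Rightarrow> label"
  nmk   :: "nat \<Rightarrow> nmark"
  emk   :: "nat \<Rightarrow> emark"
  roots :: "nat set"

definition wf_hgraph :: "hgraph \<Rightarrow> bool" where
  "wf_hgraph G \<longleftrightarrow> finite (nodes G) \<and> finite (edges G)
     \<and> (\<forall>e\<in>edges G. src G e \<in> nodes G \<and> tgt G e \<in> nodes G)
     \<and> roots G \<subseteq> nodes G"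

section \<open>Rules of the program (labels are matched by list variables and kept)\<close>

text \<open>
  NodeRule m m' r': left-hand side a single unrooted node of mark m; it becomes
  marked m'; r' = Some b sets its root status to b, None leaves it unchanged.

  EdgeRule rm om em rm' om' em' rr' or': left-hand side a root node (mark rm),
  a distinct unrooted node (mark om; None = any) and an edge of mark em between
  them, in either direction.  Afterwards the root node gets mark rm' and root
  status rr', the other node gets mark om' (None = unchanged, used with any) and
  root status or' (None = unchanged), the edge gets mark em'.
\<close>
datatype rule =
    NodeRule nmark nmark "bool option"
  | EdgeRule nmark "nmark option" emark nmark "nmark option" emark bool "bool option"

datatype mtch = MNode nat | MEdge nat nat  (* root node, host edge *)

definition mark_ok :: "nmark option \<Rightarrow> nmark \<Rightarrow> bool" where
  "mark_ok om m = (case om of None \<Rightarrow> m \<noteq> NUnmarked | Some m0 \<Rightarrow> m = m0)"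

definition set_root :: "bool \<Rightarrow> nat \<Rightarrow> nat set \<Rightarrow> nat set" where
  "set_root b v R = (if b then insert v R else R - {v})"

definition other_end :: "hgraph \<Rightarrow> nat \<Rightarrow> nat \<Rightarrow> nat" where
  "other_end G r e = (if src G e = r then tgt G e else src G e)"

fun apply_rule :: "rule \<Rightarrow> hgraph \<Rightarrow> mtch \<Rightarrow> hgraph" where
  "apply_rule (NodeRule m m' r') G (MNode v) =
     G\<lparr> nmk := (nmk G)(v := m'),
        roots := (case r' of None \<Rightarrow> roots G | Some b \<Rightarrow> set_root b v (roots G)) \<rparr>"
| "apply_rule (EdgeRule rm om em rm' om' em' rr' or') G (MEdge r e) =
     (let w = other_end G r e in
      G\<lparr> nmk := ((nmk G)(r := rm'))(w := (case om' of None \<Rightarrow> nmk G w | Some m \<Rightarrow> m)),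
         emk := (emk G)(e := em'),
         roots := (case or' of None \<Rightarrow> (\<lambda>R. R) | Some b \<Rightarrow> set_root b w)
                    (set_root rr' r (roots G)) \<rparr>)"
| "apply_rule _ G _ = G"

text \<open>
  The order in which the generated code walks through its linked lists is not
  fixed; it is supplied by an arbitrary scheduler.  A scheduler (en, ee) gives, for
  every point in time t (the number of elementary operations performed so far)
  and every finite set of nodes (resp. edges) forming a list, an enumeration
  of that list.  The theorem quantifies over all schedulers.
\<close>
type_synonym sched = "(nat \<Rightarrow> nat set \<Rightarrow> nat list) \<times> (nat \<Rightarrow> nat set \<Rightarrow> nat list)"

definition valid_sched :: "sched \<Rightarrow> bool" where
  "valid_sched \<sigma> \<longleftrightarrow>
     (\<forall>t S. finite S \<longrightarrow> set (fst \<sigma> t S) = S \<and> distinct (fst \<sigma> t S)) \<and>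
     (\<forall>t S. finite S \<longrightarrow> set (snd \<sigma> t S) = S \<and> distinct (snd \<sigma> t S))"

text \<open>Walk through a list; each inspected element costs k operations, and
  running off the end costs one fetch (returning null).\<close>
fun scan :: "nat \<Rightarrow> ('a \<Rightarrow> bool) \<Rightarrow> 'a list \<Rightarrow> 'a option \<times> nat" where
  "scan k ok [] = (None, 1)"
| "scan k ok (x # xs) =
     (if ok x then (Some x, k) else (case scan k ok xs of (r, c) \<Rightarrow> (r, k + c)))"

text \<open>Non-loop outgoing / incoming edges of a node with a given mark (loops are
  kept in a separate list).\<close>
definition out_list :: "hgraph \<Rightarrow> nat \<Rightarrow> emark \<Rightarrow> nat set" where
  "out_list G v m = {e \<in> edges G. src G e = v \<and> tgt G e \<noteq> v \<and> emk G e = m}"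

definition in_list :: "hgraph \<Rightarrow> nat \<Rightarrow> emark \<Rightarrow> nat set" where
  "in_list G v m = {e \<in> edges G. tgt G e = v \<and> src G e \<noteq> v \<and> emk G e = m}"

text \<open>Trying a root r as image of the rooted rule node: read its mark; if it
  fits, set its matched flag (1), walk the outgoing then the incoming edges of
  the required mark (per edge: fetch, read the other end, test its matched
  flag, read its mark = 4 operations), and clear the flag on failure (1).\<close>
definition try_root :: "sched \<Rightarrow> hgraph \<Rightarrow> nat \<Rightarrow> nmark \<Rightarrow> nmark option \<Rightarrow> emark
                        \<Rightarrow> nat \<Rightarrow> nat option \<times> nat" where
  "try_root \<sigma> G t rm om em r =
     (if nmk G r \<noteq> rm then (None, 0) else
      (case scan 4 (\<lambda>e. tgt G e \<noteq> r \<and> mark_ok om (nmk G (tgt G e)))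
                 (snd \<sigma> t (out_list G r em)) of
         (Some e, c1) \<Rightarrow> (Some e, 1 + c1)
       | (None, c1) \<Rightarrow>
          (case scan 4 (\<lambda>e. src G e \<noteq> r \<and> mark_ok om (nmk G (src G e)))
                     (snd \<sigma> t (in_list G r em)) of
             (Some e, c2) \<Rightarrow> (Some e, 1 + c1 + c2)
           | (None, c2) \<Rightarrow> (None, 1 + c1 + c2 + 1))))"

text \<open>Walk the root list: per root one fetch and one mark read (2).\<close>
fun search_roots :: "(nat \<Rightarrow> nat option \<times> nat) \<Rightarrow> nat list \<Rightarrow> mtch option \<times> nat" where
  "search_roots tr [] = (None, 1)"
| "search_roots tr (r # rs) =
     (case tr r of
        (Some e, c) \<Rightarrow> (Some (MEdge r e), 2 + c)
      | (None, c) \<Rightarrow> (case search_roots tr rs of (res, c') \<Rightarrow> (res, 2 + c + c')))"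

text \<open>A single unrooted node of
  mark m is matched by fetching the first node of the list of m-marked nodes.\<close>
fun search :: "sched \<Rightarrow> hgraph \<Rightarrow> nat \<Rightarrow> rule \<Rightarrow> mtch option \<times> nat" where
  "search \<sigma> G t (NodeRule m m' r') =
     (case fst \<sigma> t {v \<in> nodes G. nmk G v = m} of
        [] \<Rightarrow> (None, 1)
      | v # _ \<Rightarrow> (Some (MNode v), 1))"
| "search \<sigma> G t (EdgeRule rm om em rm' om' em' rr' or') =
     search_roots (try_root \<sigma> G t rm om em) (fst \<sigma> t (roots G))"

text \<open>Rule set call: try the rules in turn; completing an application costs 1.\<close>
fun call_rules :: "sched \<Rightarrow> hgraph \<Rightarrow> nat \<Rightarrow> rule list \<Rightarrow> hgraph option \<times> nat" where
  "call_rules \<sigma> G t [] = (None, 0)"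
| "call_rules \<sigma> G t (\<rho> # \<rho>s) =
     (case search \<sigma> G t \<rho> of
        (Some mt, c) \<Rightarrow> (Some (apply_rule \<rho> G mt), c + 1)
      | (None, c) \<Rightarrow> (case call_rules \<sigma> G (t + c) \<rho>s of (res, c') \<Rightarrow> (res, c + c')))"

datatype cmd = Call "rule list" | Seq cmd cmd | Loop cmd
  | Try cmd cmd cmd | If cmd cmd cmd | Skip | Fail | Break

datatype outcome = Ok hgraph | Failed | Brk hgraph

text \<open>exec \<sigma> P G t res t' k: running P on G, starting at time t, yields res at
  time t'; k is the number of rule applications performed and not undone (each
  is recorded and costs one operation to undo when the graph is restored).\<close>
inductive exec :: "sched \<Rightarrow> cmd \<Rightarrow> hgraph \<Rightarrow> nat \<Rightarrow> outcome \<Rightarrow> nat \<Rightarrow> nat \<Rightarrow> bool"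
  for \<sigma> :: sched where
  call_ok: "call_rules \<sigma> G t rs = (Some G', c) \<Longrightarrow> exec \<sigma> (Call rs) G t (Ok G') (t + c) 1"
| call_fail: "call_rules \<sigma> G t rs = (None, c) \<Longrightarrow> exec \<sigma> (Call rs) G t Failed (t + c) 0"
| skip: "exec \<sigma> Skip G t (Ok G) t 0"
| fail: "exec \<sigma> Fail G t Failed t 0"
| break: "exec \<sigma> Break G t (Brk G) t 0"
| seq_ok: "exec \<sigma> P G t (Ok G1) t1 k1 \<Longrightarrow> exec \<sigma> Q G1 t1 res t2 k2 \<Longrightarrow>
           exec \<sigma> (Seq P Q) G t res t2 (k1 + k2)"
| seq_fail: "exec \<sigma> P G t Failed t1 k1 \<Longrightarrow> exec \<sigma> (Seq P Q) G t Failed t1 k1"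
| seq_brk: "exec \<sigma> P G t (Brk G1) t1 k1 \<Longrightarrow> exec \<sigma> (Seq P Q) G t (Brk G1) t1 k1"
| loop_ok: "exec \<sigma> P G t (Ok G1) t1 k1 \<Longrightarrow> exec \<sigma> (Loop P) G1 t1 res t2 k2 \<Longrightarrow>
           exec \<sigma> (Loop P) G t res t2 (k1 + k2)"
| loop_fail: "exec \<sigma> P G t Failed t1 k1 \<Longrightarrow> exec \<sigma> (Loop P) G t (Ok G) (t1 + k1) 0"
| loop_brk: "exec \<sigma> P G t (Brk G1) t1 k1 \<Longrightarrow> exec \<sigma> (Loop P) G t (Ok G1) t1 k1"
| try_ok: "exec \<sigma> C G t (Ok G1) t1 k1 \<Longrightarrow> exec \<sigma> P G1 t1 res t2 k2 \<Longrightarrow>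
           exec \<sigma> (Try C P Q) G t res t2 (k1 + k2)"
| try_fail: "exec \<sigma> C G t Failed t1 k1 \<Longrightarrow> exec \<sigma> Q G (t1 + k1) res t2 k2 \<Longrightarrow>
           exec \<sigma> (Try C P Q) G t res t2 k2"
| try_brk: "exec \<sigma> C G t (Brk G1) t1 k1 \<Longrightarrow> exec \<sigma> (Try C P Q) G t (Brk G1) t1 k1"
| if_ok: "exec \<sigma> C G t (Ok G1) t1 k1 \<Longrightarrow> exec \<sigma> P G (t1 + k1) res t2 k2 \<Longrightarrow>
           exec \<sigma> (If C P Q) G t res t2 k2"
| if_fail: "exec \<sigma> C G t Failed t1 k1 \<Longrightarrow> exec \<sigma> Q G (t1 + k1) res t2 k2 \<Longrightarrow>
           exec \<sigma> (If C P Q) G t res t2 k2"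
| if_brk: "exec \<sigma> C G t (Brk G1) t1 k1 \<Longrightarrow> exec \<sigma> (If C P Q) G t (Brk G1) t1 k1"

definition r_init :: rule where "r_init = NodeRule NGrey NBlue (Some True)"
definition r_match :: rule where "r_match = NodeRule NGrey NGrey None"
definition r_next_edge :: rule where
  "r_next_edge = EdgeRule NBlue None EUnmarked NBlue None ERed True None"
definition r_ignore :: rule where
  "r_ignore = EdgeRule NBlue (Some NBlue) ERed NBlue (Some NBlue) EBlue True None"
definition r_move :: rule where
  "r_move = EdgeRule NBlue (Some NGrey) ERed NBlue (Some NBlue) EDashed False (Some True)"
text \<open>back: rooted node is node 2 of the paper's rule; the unrooted node 1
  becomes a root, node 2 a non-root.\<close>
definition r_back :: rule where
  "r_back = EdgeRule NBlue (Some NBlue) EDashed NBlue (Some NBlue) EBlue False (Some True)"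

definition FORWARD :: cmd where
  "FORWARD = Seq (Call [r_next_edge]) (Call [r_move, r_ignore])"
definition DFS :: cmd where
  "DFS = Seq (Loop FORWARD) (Try (Call [r_back]) Skip Break)"
definition Check :: cmd where
  "Check = If (Call [r_match]) Fail Skip"
definition is_connected :: cmd where
  "is_connected = Try (Call [r_init]) (Seq (Loop DFS) Check) Skip"

end

theory Submission
  imports Defs
begin

(*
  After init the host graph keeps a single blue root, only grey and blue nodes, and dashed
  edges (the DFS stack) only between blue nodes; between two FORWARD steps no edge is red.
  Under this invariant every rule match costs O(1): the unique root is found at once,
  next_edge and back accept the first candidate edge at the root because every other end
  has an admissible mark, and move/ignore have at most one red candidate.
  A successful FORWARD turns an unmarked edge dashed or blue, a successful back turns a dashed
  edge blue.  With the potential 200 * #unmarked + 100 * #dashed every successful loop body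
  is paid for by the drop in potential, and each failing body ends its loop at constant cost,
  so the running time is at most the initial potential 200 m plus a constant.
*)

section \<open>Executions of commands\<close>

lemma call_rules_cost:
  assumes "call_rules \<sigma> G t \<rho>s = (res, c)"
    and "\<And>\<rho> u. \<rho> \<in> set \<rho>s \<Longrightarrow> snd (search \<sigma> G u \<rho>) \<le> b"
  shows "c \<le> b * length \<rho>s + 1"
  using assms
proof (induction \<rho>s arbitrary: t res c)
  case (Cons \<rho> \<rho>s)
  obtain r0 c0 where s: "search \<sigma> G t \<rho> = (r0, c0)"
    by fastforce
  have c0: "c0 \<le> b"
    using Cons.prems(2)[of \<rho> t] s by simp
  show ?case
  proof (cases r0)
    case None
    obtain res' c' where rest: "call_rules \<sigma> G (t + c0) \<rho>s = (res', c')"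
      by fastforce
    have "c' \<le> b * length \<rho>s + 1"
      using Cons.IH[OF rest] Cons.prems(2) by simp
    then show ?thesis
      using Cons.prems(1) s None rest c0 by simp
  qed (use Cons.prems(1) s c0 in simp)
qed simp

lemma call_rules_Some:
  "call_rules \<sigma> G t \<rho>s = (Some G', c) \<Longrightarrow>
     \<exists>\<rho>\<in>set \<rho>s. \<exists>u mt c'. search \<sigma> G u \<rho> = (Some mt, c') \<and> G' = apply_rule \<rho> G mt"
proof (induction \<rho>s arbitrary: t c)
  case (Cons \<rho> \<rho>s)
  then show ?case
    by (fastforce split: prod.splits option.splits)
qed simp

inductive_cases exec_CallE: "exec \<sigma> (Call \<rho>s) G t res t' k"
inductive_cases exec_SeqE [consumes 1, case_names ok failed brk]: "exec \<sigma> (Seq P Q) G t res t' k"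
inductive_cases exec_TryE [consumes 1, case_names ok failed brk]: "exec \<sigma> (Try C P Q) G t res t' k"
inductive_cases exec_IfE: "exec \<sigma> (If C P Q) G t res t' k"
inductive_cases exec_SkipE: "exec \<sigma> Skip G t res t' k"
inductive_cases exec_FailE: "exec \<sigma> Fail G t res t' k"
inductive_cases exec_BreakE: "exec \<sigma> Break G t res t' k"

lemma exec_Call_time:
  assumes "exec \<sigma> (Call \<rho>s) G t res t' k"
    and "\<And>\<rho> u. \<rho> \<in> set \<rho>s \<Longrightarrow> snd (search \<sigma> G u \<rho>) \<le> b"
  shows "t' + k \<le> t + b * length \<rho>s + 2"
  using assms(1) by (rule exec_CallE) (use call_rules_cost[OF _ assms(2)] in force)+

lemma exec_Call_not_Brk: "\<not> exec \<sigma> (Call \<rho>s) G t (Brk G') t' k"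
  by (auto elim: exec_CallE)

lemma exec_Call_Ok:
  assumes "exec \<sigma> (Call \<rho>s) G t (Ok G') t' k"
  obtains \<rho> u mt c where "\<rho> \<in> set \<rho>s" "search \<sigma> G u \<rho> = (Some mt, c)" "G' = apply_rule \<rho> G mt"
proof -
  obtain c where "call_rules \<sigma> G t \<rho>s = (Some G', c)"
    using assms by (rule exec_CallE) auto
  then show thesis
    using call_rules_Some that by blast
qed

lemma exec_time_mono: "exec \<sigma> P G t res t' k \<Longrightarrow> t \<le> t'"
  by (induction rule: exec.induct) auto

lemma exec_Call_exists: "\<exists>res t' k. exec \<sigma> (Call \<rho>s) G t res t' k"
proof (cases "call_rules \<sigma> G t \<rho>s")
  case (Pair r c)
  then show ?thesis
    by (cases r) (auto intro: exec.intros)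
qed

lemma exec_Seq_exists:
  assumes "exec \<sigma> P G t res1 t1 k1"
    and "\<And>G1. res1 = Ok G1 \<Longrightarrow> \<exists>res t' k. exec \<sigma> Q G1 t1 res t' k"
  shows "\<exists>res t' k. exec \<sigma> (Seq P Q) G t res t' k"
  using assms by (cases res1) (blast intro: exec.intros)+

lemma exec_Try_exists:
  assumes "exec \<sigma> C G t res1 t1 k1"
    and "\<And>G1. res1 = Ok G1 \<Longrightarrow> \<exists>res t' k. exec \<sigma> P G1 t1 res t' k"
    and "res1 = Failed \<Longrightarrow> \<exists>res t' k. exec \<sigma> Q G (t1 + k1) res t' k"
  shows "\<exists>res t' k. exec \<sigma> (Try C P Q) G t res t' k"
  using assms by (cases res1) (blast intro: exec.intros)+

lemma exec_If_exists:
  assumes "exec \<sigma> C G t res1 t1 k1"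
    and "\<And>G1. res1 = Ok G1 \<Longrightarrow> \<exists>res t' k. exec \<sigma> P G (t1 + k1) res t' k"
    and "res1 = Failed \<Longrightarrow> \<exists>res t' k. exec \<sigma> Q G (t1 + k1) res t' k"
  shows "\<exists>res t' k. exec \<sigma> (If C P Q) G t res t' k"
  using assms by (cases res1) (blast intro: exec.intros)+

lemma exec_Loop_exists:
  assumes "I G"
    and step: "\<And>G t. I G \<Longrightarrow> \<exists>res t' k. exec \<sigma> P G t res t' k"
    and progress: "\<And>G t G1 t1 k1. I G \<Longrightarrow> exec \<sigma> P G t (Ok G1) t1 k1 \<Longrightarrow> I G1 \<and> f G1 < (f G :: nat)"
  shows "\<exists>res t' k. exec \<sigma> (Loop P) G t res t' k"
  using assms(1)
proof (induction "f G" arbitrary: G t rule: less_induct)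
  case less
  obtain res t1 k1 where run: "exec \<sigma> P G t res t1 k1"
    using step[OF less.prems] by blast
  show ?case
  proof (cases res)
    case (Ok G1)
    with less progress[OF less.prems] run obtain res' t' k' where "exec \<sigma> (Loop P) G1 t1 res' t' k'"
      by blast
    with run Ok show ?thesis
      by (blast intro: exec.loop_ok)
  qed (use run in \<open>blast intro: exec.intros\<close>)+
qed

fun loop_free :: "cmd \<Rightarrow> bool" where
  "loop_free (Loop P) = False"
| "loop_free (Seq P Q) = (loop_free P \<and> loop_free Q)"
| "loop_free (Try C P Q) = (loop_free C \<and> loop_free P \<and> loop_free Q)"
| "loop_free (If C P Q) = (loop_free C \<and> loop_free P \<and> loop_free Q)"
| "loop_free _ = True"

lemma exec_exists_loop_free: "loop_free P \<Longrightarrow> \<exists>res t' k. exec \<sigma> P G t res t' k"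
proof (induction P arbitrary: G t)
  case (Seq P Q)
  obtain res t1 k1 where "exec \<sigma> P G t res t1 k1"
    using Seq by fastforce
  then show ?case
    using Seq by (intro exec_Seq_exists) auto
next
  case (Try C P Q)
  obtain res t1 k1 where "exec \<sigma> C G t res t1 k1"
    using Try by fastforce
  then show ?case
    using Try by (intro exec_Try_exists) auto
next
  case (If C P Q)
  obtain res t1 k1 where "exec \<sigma> C G t res t1 k1"
    using If by fastforce
  then show ?case
    using If by (intro exec_If_exists) auto
qed (auto intro: exec_Call_exists exec.intros)

lemma exec_Loop_amortized:
  assumes "exec \<sigma> (Loop P) G t res t' k" and "I G"
    and step: "\<And>G t res t1 k1. I G \<Longrightarrow> exec \<sigma> P G t res t1 k1 \<Longrightarrow>
         (\<exists>G1. res = Ok G1 \<and> I G1 \<and> t1 + f G1 \<le> t + f G)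
       \<or> (res = Failed \<and> t1 + k1 \<le> t + C)
       \<or> (\<exists>G1. res = Brk G1 \<and> I G1 \<and> t1 + f G1 \<le> t + f G + C)"
  shows "\<exists>G'. res = Ok G' \<and> I G' \<and> t' + f G' \<le> t + f G + (C :: nat)"
  using assms(1,2)
proof (induction "Loop P" G t res t' k rule: exec.induct)
  case (loop_ok G t G1 t1 k1 res t2 k2)
  then show ?case
    using step[OF loop_ok.prems loop_ok.hyps(1)] by fastforce
qed (use step in fastforce)+

section \<open>Cost of rule matching\<close>

lemma scan_cost_le: "snd (scan k ok xs) \<le> k * length xs + 1"
  by (induction xs) (auto split: prod.split)

lemma scan_cost_all_ok: "\<forall>x\<in>set xs. ok x \<Longrightarrow> snd (scan k ok xs) \<le> k + 1"
  by (cases xs) auto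

lemma scan_Some: "scan k ok xs = (Some x, c) \<Longrightarrow> x \<in> set xs \<and> ok x"
  by (induction xs arbitrary: c) (auto split: prod.splits if_splits)

lemma valid_schedD_nodes:
  "valid_sched \<sigma> \<Longrightarrow> finite S \<Longrightarrow> set (fst \<sigma> t S) = S \<and> distinct (fst \<sigma> t S)"
  unfolding valid_sched_def by blast

lemma valid_schedD_edges:
  "valid_sched \<sigma> \<Longrightarrow> finite S \<Longrightarrow> set (snd \<sigma> t S) = S \<and> distinct (snd \<sigma> t S)"
  unfolding valid_sched_def by blast

lemma distinct_set_singleton: "distinct xs \<Longrightarrow> set xs = {x} \<Longrightarrow> xs = [x]"
  by (cases xs) (auto simp: insert_eq_iff subset_singleton_iff dest: subset_singletonD)

lemma search_NodeRule_cost: "snd (search \<sigma> G t (NodeRule m m' r')) = 1"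
  by (simp split: list.split)

lemma search_NodeRule_Some:
  assumes "valid_sched \<sigma>" and "finite (nodes G)"
    and "search \<sigma> G t (NodeRule m m' r') = (Some mt, c)"
  obtains v where "mt = MNode v" "v \<in> nodes G" "nmk G v = m"
proof -
  let ?vs = "fst \<sigma> t {v \<in> nodes G. nmk G v = m}"
  have "set ?vs = {v \<in> nodes G. nmk G v = m}"
    using valid_schedD_nodes assms(1,2) by simp
  then show thesis
    using assms(3) that by (cases ?vs) auto
qed

definition marked_edges :: "hgraph \<Rightarrow> emark \<Rightarrow> nat set" where
  "marked_edges G m = {e \<in> edges G. emk G e = m}"

lemma search_EdgeRule_single_root:
  assumes "valid_sched \<sigma>" and "roots G = {r}"
  shows "search \<sigma> G t (EdgeRule rm om em rm' om' em' rr' or') =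
           search_roots (try_root \<sigma> G t rm om em) [r]"
proof -
  have "fst \<sigma> t {r} = [r]"
    using valid_schedD_nodes[OF assms(1), of "{r}" t] by (simp add: distinct_set_singleton)
  then show ?thesis
    using assms(2) by (simp del: search_roots.simps)
qed

lemma search_EdgeRule_cost:
  assumes vs: "valid_sched \<sigma>" and fin: "finite (edges G)" and rt: "roots G = {r}"
  shows "snd (search \<sigma> G t (EdgeRule rm om em rm' om' em' rr' or'))
           \<le> 7 + 4 * card (marked_edges G em)" (is "?c \<le> _")
    and "\<forall>e \<in> out_list G r em \<union> in_list G r em. mark_ok om (nmk G (other_end G r e))
           \<Longrightarrow> snd (search \<sigma> G t (EdgeRule rm om em rm' om' em' rr' or')) \<le> 15"
proof -
  let ?po = "\<lambda>e. tgt G e \<noteq> r \<and> mark_ok om (nmk G (tgt G e))"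
  let ?pi = "\<lambda>e. src G e \<noteq> r \<and> mark_ok om (nmk G (src G e))"
  let ?xo = "snd \<sigma> t (out_list G r em)" and ?xi = "snd \<sigma> t (in_list G r em)"
  have fin_lists: "finite (out_list G r em)" "finite (in_list G r em)"
    using fin by (simp_all add: out_list_def in_list_def)
  have xo: "set ?xo = out_list G r em" "distinct ?xo"
    and xi: "set ?xi = in_list G r em" "distinct ?xi"
    using valid_schedD_edges[OF vs] fin_lists by blast+
  have c: "?c \<le> 5 + snd (scan 4 ?po ?xo) + snd (scan 4 ?pi ?xi)"
    unfolding search_EdgeRule_single_root[OF vs rt]
    by (auto simp: try_root_def split: prod.splits option.splits if_splits)
  have "card (out_list G r em) + card (in_list G r em) \<le> card (marked_edges G em)"
  proof -
    have "card (out_list G r em) + card (in_list G r em) = card (out_list G r em \<union> in_list G r em)"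
      using fin_lists by (intro card_Un_disjoint[symmetric]) (auto simp: out_list_def in_list_def)
    also have "\<dots> \<le> card (marked_edges G em)"
      using fin by (intro card_mono) (auto simp: out_list_def in_list_def marked_edges_def)
    finally show ?thesis .
  qed
  then show "?c \<le> 7 + 4 * card (marked_edges G em)"
    using c scan_cost_le[of 4 ?po ?xo] scan_cost_le[of 4 ?pi ?xi]
      distinct_card[OF xo(2)] distinct_card[OF xi(2)] unfolding xo xi by linarith
  assume ok: "\<forall>e \<in> out_list G r em \<union> in_list G r em. mark_ok om (nmk G (other_end G r e))"
  have "\<forall>e\<in>set ?xo. ?po e" "\<forall>e\<in>set ?xi. ?pi e"
    using ok unfolding xo xi Ball_def by (auto simp: out_list_def in_list_def other_end_def)
  then show "?c \<le> 15"
    using c scan_cost_all_ok[of ?xo ?po 4] scan_cost_all_ok[of ?xi ?pi 4] by linarith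
qed

lemma search_EdgeRule_Some:
  assumes vs: "valid_sched \<sigma>" and fin: "finite (edges G)" and rt: "roots G = {r}"
    and s: "search \<sigma> G t (EdgeRule rm om em rm' om' em' rr' or') = (Some mt, c)"
  obtains e where "mt = MEdge r e" "e \<in> edges G" "emk G e = em"
    "r \<in> {src G e, tgt G e}" "src G e \<noteq> tgt G e"
proof -
  have "set (snd \<sigma> t (out_list G r em)) = out_list G r em"
    "set (snd \<sigma> t (in_list G r em)) = in_list G r em"
    using valid_schedD_edges[OF vs] fin by (simp_all add: out_list_def in_list_def)
  then obtain e where "mt = MEdge r e" "e \<in> out_list G r em \<union> in_list G r em"
    using s unfolding search_EdgeRule_single_root[OF vs rt]
    by (auto simp: try_root_def split: prod.splits option.splits if_splits dest!: scan_Some)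
  then show thesis
    by (intro that) (auto simp: out_list_def in_list_def)
qed

section \<open>The depth-first search invariant\<close>

definition dfs_inv :: "hgraph \<Rightarrow> bool" where
  "dfs_inv G \<longleftrightarrow> wf_hgraph G
     \<and> (\<forall>v\<in>nodes G. nmk G v \<in> {NGrey, NBlue})
     \<and> (\<exists>r. roots G = {r} \<and> nmk G r = NBlue)
     \<and> (\<forall>e\<in>marked_edges G EDashed. nmk G (src G e) = NBlue \<and> nmk G (tgt G e) = NBlue)"

lemma dfs_inv_update:
  assumes inv: "dfs_inv G" and e: "e \<in> edges G"
    and ends: "{src G e, tgt G e} = {r, w}" and "w \<noteq> r"
    and mw: "mw = NBlue \<or> mw = nmk G w" and dashed: "em' = EDashed \<longrightarrow> mw = NBlue"
    and z: "z = r \<or> (z = w \<and> mw = NBlue)"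
  shows "dfs_inv (G\<lparr>nmk := (nmk G)(r := NBlue, w := mw), emk := (emk G)(e := em'), roots := {z}\<rparr>)"
    (is "dfs_inv ?G'")
proof -
  have "src G e \<in> nodes G" "tgt G e \<in> nodes G"
    using inv e unfolding dfs_inv_def wf_hgraph_def by auto
  moreover have "r \<in> {src G e, tgt G e}" "w \<in> {src G e, tgt G e}"
    unfolding ends by simp_all
  ultimately have "z \<in> nodes G"
    using z by auto
  then have "wf_hgraph ?G'"
    using inv unfolding dfs_inv_def wf_hgraph_def by auto
  moreover have "\<forall>v\<in>nodes ?G'. nmk ?G' v \<in> {NGrey, NBlue}"
    using inv mw unfolding dfs_inv_def by auto
  moreover have "\<exists>r. roots ?G' = {r} \<and> nmk ?G' r = NBlue"
    using z \<open>w \<noteq> r\<close> by auto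
  moreover have "nmk ?G' (src ?G' x) = NBlue \<and> nmk ?G' (tgt ?G' x) = NBlue"
    if "x \<in> marked_edges ?G' EDashed" for x
  proof (cases "x = e")
    case True
    then show ?thesis
      using that dashed ends unfolding marked_edges_def by (auto simp: doubleton_eq_iff)
  next
    case False
    then have "x \<in> marked_edges G EDashed"
      using that by (simp add: marked_edges_def)
    then show ?thesis
      using inv mw unfolding dfs_inv_def by auto
  qed
  ultimately show ?thesis
    unfolding dfs_inv_def by blast
qed

lemma apply_EdgeRule_single_root:
  assumes "roots G = {r}" and "other_end G r e \<noteq> r"
    and "(rr' \<and> or' = None) \<or> (\<not> rr' \<and> or' = Some True)"
  shows "apply_rule (EdgeRule rm om em rm' om' em' rr' or') G (MEdge r e) =
    (let w = other_end G r e
     in G\<lparr>nmk := (nmk G)(r := rm', w := (case om' of None \<Rightarrow> nmk G w | Some m \<Rightarrow> m)),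
          emk := (emk G)(e := em'), roots := {if rr' then r else w}\<rparr>)"
  using assms by (elim disjE) (simp_all add: Let_def set_root_def)

lemma dfs_inv_apply_EdgeRule:
  assumes inv: "dfs_inv G" and rt: "roots G = {r}" and e: "e \<in> edges G"
    and incident: "r \<in> {src G e, tgt G e}" and no_loop: "src G e \<noteq> tgt G e"
    and mark: "om' \<in> {None, Some NBlue}"
    and dashed: "em' = EDashed \<longrightarrow> om' = Some NBlue"
    and root: "(rr' \<and> or' = None) \<or> (\<not> rr' \<and> or' = Some True \<and> om' = Some NBlue)"
  shows "dfs_inv (apply_rule (EdgeRule rm om em NBlue om' em' rr' or') G (MEdge r e))"
proof -
  define w where "w = other_end G r e"
  have ends: "{src G e, tgt G e} = {r, w}" "w \<noteq> r"
    using incident no_loop unfolding w_def other_end_def by auto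
  have "(rr' \<and> or' = None) \<or> (\<not> rr' \<and> or' = Some True)"
    using root by blast
  from apply_EdgeRule_single_root[OF rt ends(2)[unfolded w_def] this] show ?thesis
    unfolding Let_def w_def[symmetric]
    by (rule ssubst, intro dfs_inv_update[OF inv e ends]) (use mark dashed root in auto)
qed

text \<open>An unmarked edge pays for the FORWARD step that consumes it and, once dashed, for the
  back step over it.  A unit of 100 covers one back step together with the failing FORWARD
  that ends each round of DFS.\<close>

fun edge_weight :: "emark \<Rightarrow> nat" where
  "edge_weight EUnmarked = 200"
| "edge_weight EDashed = 100"
| "edge_weight _ = 0"

definition potential :: "hgraph \<Rightarrow> nat" where
  "potential G = (\<Sum>e\<in>edges G. edge_weight (emk G e))"

lemma potential_le: "finite (edges G) \<Longrightarrow> potential G \<le> 200 * card (edges G)"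
proof -
  have "edge_weight m \<le> 200" for m
    by (cases m) simp_all
  then show "potential G \<le> 200 * card (edges G)"
    unfolding potential_def using sum_bounded_above[of "edges G" "\<lambda>e. edge_weight (emk G e)" 200]
    by (simp add: mult.commute)
qed

lemma potential_remark:
  assumes fin: "finite (edges G)" and e: "e \<in> edges G"
    and "edges G' = edges G" and "emk G' = (emk G)(e := m)"
  shows "potential G' + edge_weight (emk G e) = potential G + edge_weight m"
proof -
  have rest: "(\<Sum>x\<in>edges G - {e}. edge_weight (emk G' x))
      = (\<Sum>x\<in>edges G - {e}. edge_weight (emk G x))"
    using assms(4) by (intro sum.cong) auto
  show ?thesis
    unfolding potential_def assms(3) sum.remove[OF fin e] rest using assms(4) by simp
qed

lemma edge_rule_step:
  assumes vs: "valid_sched \<sigma>" and inv: "dfs_inv G" and rt: "roots G = {r}"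
    and s: "search \<sigma> G u (EdgeRule rm om em NBlue om' em' rr' or') = (Some mt, c)"
    and mark: "om' \<in> {None, Some NBlue}"
    and dashed: "em' = EDashed \<longrightarrow> om' = Some NBlue"
    and root: "(rr' \<and> or' = None) \<or> (\<not> rr' \<and> or' = Some True \<and> om' = Some NBlue)"
    and G': "G' = apply_rule (EdgeRule rm om em NBlue om' em' rr' or') G mt"
  obtains e where "e \<in> edges G" "emk G e = em" "dfs_inv G'"
    "edges G' = edges G" "emk G' = (emk G)(e := em')"
    "potential G' + edge_weight em = potential G + edge_weight em'"
proof -
  have fin: "finite (edges G)"
    using inv unfolding dfs_inv_def wf_hgraph_def by blast
  obtain e where e: "mt = MEdge r e" "e \<in> edges G" "emk G e = em"
      "r \<in> {src G e, tgt G e}" "src G e \<noteq> tgt G e"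
    using search_EdgeRule_Some[OF vs fin rt s] by blast
  have "dfs_inv G'"
    unfolding G' e(1) using dfs_inv_apply_EdgeRule[OF inv rt e(2,4,5) mark dashed root] .
  moreover have "edges G' = edges G" "emk G' = (emk G)(e := em')"
    unfolding G' e(1) by (simp_all add: Let_def)
  moreover have "potential G' + edge_weight em = potential G + edge_weight em'"
    using potential_remark[OF fin e(2) calculation(2,3)] e(3) by simp
  ultimately show thesis
    using that e(2,3) by blast
qed

section \<open>Running time of is-connected\<close>

definition initial_graph :: "hgraph \<Rightarrow> bool" where
  "initial_graph G \<longleftrightarrow> wf_hgraph G \<and> (\<forall>v\<in>nodes G. nmk G v = NGrey) \<and> roots G = {}
     \<and> (\<forall>e\<in>edges G. emk G e = EUnmarked)"

lemma init_exec:
  assumes run: "exec \<sigma> (Call [r_init]) G t res t' k"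
    and vs: "valid_sched \<sigma>" and G: "initial_graph G"
  shows "t' + k \<le> t + 3"
    and "res = Ok G' \<Longrightarrow> dfs_inv G' \<and> marked_edges G' ERed = {} \<and> edges G' = edges G"
proof -
  have "snd (search \<sigma> G u r_init) \<le> 1" for u
    unfolding r_init_def search_NodeRule_cost by simp
  then show "t' + k \<le> t + 3"
    using exec_Call_time[OF run, of 1] by simp
  assume "res = Ok G'"
  then obtain u mt c where s: "search \<sigma> G u r_init = (Some mt, c)"
      and G': "G' = apply_rule r_init G mt"
    using run by (auto elim: exec_Call_Ok)
  have fin: "finite (nodes G)"
    using G unfolding initial_graph_def wf_hgraph_def by blast
  obtain v where "mt = MNode v" "v \<in> nodes G"
    using search_NodeRule_Some[OF vs fin s[unfolded r_init_def]] by blast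
  then show "dfs_inv G' \<and> marked_edges G' ERed = {} \<and> edges G' = edges G"
    using G unfolding G' initial_graph_def dfs_inv_def wf_hgraph_def marked_edges_def r_init_def
    by (auto simp: set_root_def)
qed

lemma next_edge_exec:
  assumes run: "exec \<sigma> (Call [r_next_edge]) G t res t' k"
    and vs: "valid_sched \<sigma>" and inv: "dfs_inv G"
  shows "t' + k \<le> t + 17"
    and "res = Ok G' \<Longrightarrow> dfs_inv G' \<and> (\<exists>e. marked_edges G' ERed \<subseteq> insert e (marked_edges G ERed))
           \<and> potential G' + 200 = potential G"
proof -
  obtain r where rt: "roots G = {r}"
    using inv unfolding dfs_inv_def by blast
  have fin: "finite (edges G)"
    using inv unfolding dfs_inv_def wf_hgraph_def by blast
  have "mark_ok None (nmk G (other_end G r e))"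
    if "e \<in> out_list G r EUnmarked \<union> in_list G r EUnmarked" for e
    using that inv
    unfolding dfs_inv_def wf_hgraph_def mark_ok_def out_list_def in_list_def other_end_def
    by force
  then have "snd (search \<sigma> G u r_next_edge) \<le> 15" for u
    unfolding r_next_edge_def using search_EdgeRule_cost(2)[OF vs fin rt] by blast
  then show "t' + k \<le> t + 17"
    using exec_Call_time[OF run, of 15] by simp
  assume "res = Ok G'"
  then obtain u mt c where s: "search \<sigma> G u r_next_edge = (Some mt, c)"
      and G': "G' = apply_rule r_next_edge G mt"
    using run by (auto elim: exec_Call_Ok)
  obtain e where "dfs_inv G'" "edges G' = edges G" "emk G' = (emk G)(e := ERed)"
      "potential G' + 200 = potential G"
    using edge_rule_step[OF vs inv rt s[unfolded r_next_edge_def] _ _ _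
        G'[unfolded r_next_edge_def]]
    by auto
  then show "dfs_inv G' \<and> (\<exists>e. marked_edges G' ERed \<subseteq> insert e (marked_edges G ERed))
           \<and> potential G' + 200 = potential G"
    unfolding marked_edges_def by auto
qed

lemma move_or_ignore_exec:
  assumes run: "exec \<sigma> (Call [r_move, r_ignore]) G t res t' k"
    and vs: "valid_sched \<sigma>" and inv: "dfs_inv G" and red: "marked_edges G ERed \<subseteq> {e0}"
  shows "t' + k \<le> t + 24"
    and "res = Ok G' \<Longrightarrow> dfs_inv G' \<and> marked_edges G' ERed = {} \<and> potential G' \<le> potential G + 100"
proof -
  obtain r where rt: "roots G = {r}"
    using inv unfolding dfs_inv_def by blast
  have fin: "finite (edges G)"
    using inv unfolding dfs_inv_def wf_hgraph_def by blast
  have "card (marked_edges G ERed) \<le> 1"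
    using card_mono[OF _ red] by simp
  then have "snd (search \<sigma> G u \<rho>) \<le> 11" if "\<rho> \<in> set [r_move, r_ignore]" for \<rho> u
    using that search_EdgeRule_cost(1)[OF vs fin rt] unfolding r_move_def r_ignore_def
    by (fastforce intro: order_trans)
  then show "t' + k \<le> t + 24"
    using exec_Call_time[OF run, of 11] by simp
  assume "res = Ok G'"
  then obtain \<rho> u mt c where \<rho>: "\<rho> \<in> {r_move, r_ignore}" and s: "search \<sigma> G u \<rho> = (Some mt, c)"
      and G': "G' = apply_rule \<rho> G mt"
    using run by (auto elim: exec_Call_Ok)
  then obtain om em' rr' or' where
      \<rho>_eq: "\<rho> = EdgeRule NBlue (Some om) ERed NBlue (Some NBlue) em' rr' or'"
      and em': "em' \<in> {EDashed, EBlue}" and root: "(rr' \<and> or' = None) \<or> (\<not> rr' \<and> or' = Some True)"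
    unfolding r_move_def r_ignore_def by blast
  obtain e where "e \<in> edges G" "emk G e = ERed" "dfs_inv G'" "edges G' = edges G"
      "emk G' = (emk G)(e := em')"
      "potential G' = potential G + edge_weight em'"
    using edge_rule_step[OF vs inv rt s[unfolded \<rho>_eq] _ _ _ G'[unfolded \<rho>_eq]] em' root by auto
  then show "dfs_inv G' \<and> marked_edges G' ERed = {} \<and> potential G' \<le> potential G + 100"
    using red em' unfolding marked_edges_def by auto
qed

lemma back_exec:
  assumes run: "exec \<sigma> (Call [r_back]) G t res t' k"
    and vs: "valid_sched \<sigma>" and inv: "dfs_inv G"
  shows "t' + k \<le> t + 17"
    and "res = Ok G' \<Longrightarrow> dfs_inv G' \<and> marked_edges G' ERed = marked_edges G ERed
           \<and> potential G' + 100 = potential G"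
proof -
  obtain r where rt: "roots G = {r}"
    using inv unfolding dfs_inv_def by blast
  have fin: "finite (edges G)"
    using inv unfolding dfs_inv_def wf_hgraph_def by blast
  have "mark_ok (Some NBlue) (nmk G (other_end G r e))"
    if "e \<in> out_list G r EDashed \<union> in_list G r EDashed" for e
    using that inv
    unfolding dfs_inv_def marked_edges_def mark_ok_def out_list_def in_list_def other_end_def
    by auto
  then have "snd (search \<sigma> G u r_back) \<le> 15" for u
    unfolding r_back_def using search_EdgeRule_cost(2)[OF vs fin rt] by blast
  then show "t' + k \<le> t + 17"
    using exec_Call_time[OF run, of 15] by simp
  assume "res = Ok G'"
  then obtain u mt c where s: "search \<sigma> G u r_back = (Some mt, c)"
      and G': "G' = apply_rule r_back G mt"
    using run by (auto elim: exec_Call_Ok)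
  obtain e where "emk G e = EDashed" "dfs_inv G'" "edges G' = edges G"
      "emk G' = (emk G)(e := EBlue)" "potential G' + 100 = potential G"
    using edge_rule_step[OF vs inv rt s[unfolded r_back_def] _ _ _ G'[unfolded r_back_def]]
    by auto
  then show "dfs_inv G' \<and> marked_edges G' ERed = marked_edges G ERed
           \<and> potential G' + 100 = potential G"
    unfolding marked_edges_def by auto
qed

lemma forward_exec:
  assumes run: "exec \<sigma> FORWARD G t res t' k"
    and vs: "valid_sched \<sigma>" and inv: "dfs_inv G" and red: "marked_edges G ERed = {}"
  shows "t' + k \<le> t + 41 \<and> (res = Failed \<or> (\<exists>G'. res = Ok G' \<and> dfs_inv G'
           \<and> marked_edges G' ERed = {} \<and> potential G' + 100 \<le> potential G))"
  using run unfolding FORWARD_def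
proof (cases rule: exec_SeqE)
  case (ok G1 t1 k1 k2)
  note next_edge = next_edge_exec[OF ok(2) vs inv]
  obtain e0 where "dfs_inv G1" "marked_edges G1 ERed \<subseteq> {e0}" "potential G1 + 200 = potential G"
    using next_edge(2) red by blast
  note move = move_or_ignore_exec[OF ok(3) vs this(1,2)]
  show ?thesis
    using next_edge(1) move ok(1,3) \<open>potential G1 + 200 = potential G\<close>
    by (cases res) (auto simp: exec_Call_not_Brk)
next
  case failed
  then show ?thesis
    using next_edge_exec(1)[OF failed(2) vs inv] by simp
next
  case (brk G1)
  then show ?thesis
    by (simp add: exec_Call_not_Brk)
qed

lemma loop_forward_exec:
  assumes run: "exec \<sigma> (Loop FORWARD) G t res t' k"
    and vs: "valid_sched \<sigma>" and inv: "dfs_inv G" and red: "marked_edges G ERed = {}"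
  shows "\<exists>G'. res = Ok G' \<and> dfs_inv G' \<and> marked_edges G' ERed = {}
           \<and> t' + potential G' \<le> t + potential G + 41"
proof -
  have "(\<exists>G1. res = Ok G1 \<and> (dfs_inv G1 \<and> marked_edges G1 ERed = {})
             \<and> t1 + potential G1 \<le> t + potential G)
      \<or> (res = Failed \<and> t1 + k1 \<le> t + 41)
      \<or> (\<exists>G1. res = Brk G1 \<and> (dfs_inv G1 \<and> marked_edges G1 ERed = {})
             \<and> t1 + potential G1 \<le> t + potential G + 41)"
    if "dfs_inv G \<and> marked_edges G ERed = {}" and "exec \<sigma> FORWARD G t res t1 k1" for G t res t1 k1
    using forward_exec[OF that(2) vs] that(1) by auto
  from exec_Loop_amortized[OF run _ this] show ?thesis
    using inv red by blast
qed

lemma dfs_exec: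
  assumes run: "exec \<sigma> DFS G t res t' k"
    and vs: "valid_sched \<sigma>" and inv: "dfs_inv G" and red: "marked_edges G ERed = {}"
  shows "(\<exists>G'. res = Ok G' \<and> dfs_inv G' \<and> marked_edges G' ERed = {}
            \<and> t' + potential G' + 42 \<le> t + potential G)
       \<or> (\<exists>G'. res = Brk G' \<and> dfs_inv G' \<and> marked_edges G' ERed = {}
            \<and> t' + potential G' \<le> t + potential G + 58)"
proof -
  obtain G1 t1 k1 k2 where loop: "exec \<sigma> (Loop FORWARD) G t (Ok G1) t1 k1"
      and try_back: "exec \<sigma> (Try (Call [r_back]) Skip Break) G1 t1 res t' k2"
    using run unfolding DFS_def
    by (cases rule: exec_SeqE) (blast dest: loop_forward_exec[OF _ vs inv red])+
  have G1: "dfs_inv G1" "marked_edges G1 ERed = {}" "t1 + potential G1 \<le> t + potential G + 41"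
    using loop_forward_exec[OF loop vs inv red] by auto
  from try_back show ?thesis
  proof (cases rule: exec_TryE)
    case (ok G2 t2 k3 k4)
    then show ?thesis
      using back_exec[OF ok(2) vs G1(1)] G1 by (auto elim: exec_SkipE)
  next
    case (failed t2 k3)
    then show ?thesis
      using back_exec(1)[OF failed(1) vs G1(1)] G1 by (auto elim: exec_BreakE)
  next
    case (brk G2)
    then show ?thesis
      by (simp add: exec_Call_not_Brk)
  qed
qed

lemma loop_dfs_time:
  assumes run: "exec \<sigma> (Loop DFS) G t res t' k"
    and vs: "valid_sched \<sigma>" and inv: "dfs_inv G" and red: "marked_edges G ERed = {}"
  shows "t' \<le> t + potential G + 58"
proof -
  have "(\<exists>G1. res = Ok G1 \<and> (dfs_inv G1 \<and> marked_edges G1 ERed = {})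
             \<and> t1 + potential G1 \<le> t + potential G)
      \<or> (res = Failed \<and> t1 + k1 \<le> t + 58)
      \<or> (\<exists>G1. res = Brk G1 \<and> (dfs_inv G1 \<and> marked_edges G1 ERed = {})
             \<and> t1 + potential G1 \<le> t + potential G + 58)"
    if "dfs_inv G \<and> marked_edges G ERed = {}" and "exec \<sigma> DFS G t res t1 k1" for G t res t1 k1
    using dfs_exec[OF that(2) vs] that(1) by auto
  from exec_Loop_amortized[OF run _ this] show ?thesis
    using inv red by auto
qed

lemma check_time:
  assumes "exec \<sigma> Check G t res t' k"
  shows "t' \<le> t + 3"
proof -
  have "snd (search \<sigma> G u r_match) \<le> 1" for u
    unfolding r_match_def search_NodeRule_cost by simp
  then have "t1 + k1 \<le> t + 3" if "exec \<sigma> (Call [r_match]) G t res1 t1 k1" for res1 t1 k1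
    using exec_Call_time[OF that, of 1] by simp
  with assms show ?thesis
    unfolding Check_def by (auto elim!: exec_IfE exec_FailE exec_SkipE elim: exec_CallE)
qed

lemma is_connected_time:
  assumes run: "exec \<sigma> is_connected G 0 res t k"
    and vs: "valid_sched \<sigma>" and G: "initial_graph G"
  shows "t \<le> 200 * card (edges G) + 64"
  using run unfolding is_connected_def
proof (cases rule: exec_TryE)
  case (ok G1 t1 k1 k2)
  note init = init_exec[OF ok(2) vs G]
  have inv: "dfs_inv G1" "marked_edges G1 ERed = {}" "edges G1 = edges G"
    using init(2) by auto
  have "potential G1 \<le> 200 * card (edges G)"
    using inv potential_le[of G1] unfolding dfs_inv_def wf_hgraph_def by auto
  moreover have "t \<le> t1 + potential G1 + 61"
    using ok(3)
  proof (cases rule: exec_SeqE)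
    case (ok G2 t2 k3 k4)
    then show ?thesis
      using loop_dfs_time[OF ok(2) vs inv(1,2)] check_time[OF ok(3)] by linarith
  qed (fastforce dest: loop_dfs_time[OF _ vs inv(1,2)])+
  ultimately show ?thesis
    using init(1) by linarith
next
  case (failed t1 k1)
  then show ?thesis
    using init_exec(1)[OF failed(1) vs G] by (auto elim: exec_SkipE)
next
  case (brk G1)
  then show ?thesis
    by (simp add: exec_Call_not_Brk)
qed

lemma dfs_exec_exists:
  assumes vs: "valid_sched \<sigma>" and inv: "dfs_inv G" and red: "marked_edges G ERed = {}"
  shows "\<exists>res t' k. exec \<sigma> DFS G t res t' k"
proof -
  have "\<exists>res t' k. exec \<sigma> (Loop FORWARD) G t res t' k"
  proof (rule exec_Loop_exists[where I = "\<lambda>G. dfs_inv G \<and> marked_edges G ERed = {}"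
        and f = potential])
    show "dfs_inv G \<and> marked_edges G ERed = {}"
      using inv red ..
    show "\<exists>res t' k. exec \<sigma> FORWARD G' t res t' k" for G' t
      by (rule exec_exists_loop_free) (simp add: FORWARD_def)
    show "(dfs_inv G1 \<and> marked_edges G1 ERed = {}) \<and> potential G1 < potential G'"
      if "dfs_inv G' \<and> marked_edges G' ERed = {}" and "exec \<sigma> FORWARD G' t (Ok G1) t1 k1"
      for G' t G1 t1 k1
      using forward_exec[OF that(2) vs] that(1) by auto
  qed
  then obtain res t1 k1 where "exec \<sigma> (Loop FORWARD) G t res t1 k1"
    by blast
  then show ?thesis
    unfolding DFS_def by (rule exec_Seq_exists) (rule exec_exists_loop_free, simp)
qed

lemma is_connected_exec_exists:
  assumes vs: "valid_sched \<sigma>" and G: "initial_graph G"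
  shows "\<exists>res t k. exec \<sigma> is_connected G 0 res t k"
proof -
  have loop_dfs: "\<exists>res t' k. exec \<sigma> (Loop DFS) G1 t1 res t' k"
    if "dfs_inv G1" and "marked_edges G1 ERed = {}" for G1 t1
  proof (rule exec_Loop_exists[where I = "\<lambda>G. dfs_inv G \<and> marked_edges G ERed = {}"
        and f = potential])
    show "dfs_inv G1 \<and> marked_edges G1 ERed = {}"
      using that ..
    show "\<exists>res t' k. exec \<sigma> DFS G' t res t' k" if "dfs_inv G' \<and> marked_edges G' ERed = {}" for G' t
      using dfs_exec_exists[OF vs] that by blast
    show "(dfs_inv G2 \<and> marked_edges G2 ERed = {}) \<and> potential G2 < potential G'"
      if "dfs_inv G' \<and> marked_edges G' ERed = {}" and "exec \<sigma> DFS G' t (Ok G2) t2 k2"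
      for G' t G2 t2 k2
      using dfs_exec[OF that(2) vs] that(1) exec_time_mono[OF that(2)] by auto
  qed
  obtain res t1 k1 where init: "exec \<sigma> (Call [r_init]) G 0 res t1 k1"
    using exec_Call_exists by blast
  then show ?thesis
    unfolding is_connected_def
  proof (rule exec_Try_exists)
    fix G1
    assume "res = Ok G1"
    then have "dfs_inv G1" "marked_edges G1 ERed = {}"
      using init_exec(2)[OF init vs G] by auto
    then obtain res' t2 k2 where "exec \<sigma> (Loop DFS) G1 t1 res' t2 k2"
      using loop_dfs by blast
    then show "\<exists>res t' k. exec \<sigma> (Seq (Loop DFS) Check) G1 t1 res t' k"
      by (rule exec_Seq_exists) (rule exec_exists_loop_free, simp add: Check_def)
  qed (rule exec_exists_loop_free, simp)
qed

theorem mainTheorem2: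
  "\<exists>c::nat. \<forall>G \<sigma>.
     wf_hgraph G \<and> (\<forall>v\<in>nodes G. nmk G v = NGrey) \<and> roots G = {}
     \<and> (\<forall>e\<in>edges G. emk G e = EUnmarked) \<and> valid_sched \<sigma>
     \<longrightarrow> (\<exists>res t k. exec \<sigma> is_connected G 0 res t k)
       \<and> (\<forall>res t k. exec \<sigma> is_connected G 0 res t k
              \<longrightarrow> t \<le> c * (card (nodes G) + card (edges G)) + c)"
proof (rule exI[of _ 200], intro allI impI, rule conjI)
  fix G \<sigma>
  assume "wf_hgraph G \<and> (\<forall>v\<in>nodes G. nmk G v = NGrey) \<and> roots G = {}
     \<and> (\<forall>e\<in>edges G. emk G e = EUnmarked) \<and> valid_sched \<sigma>"
  then have G: "initial_graph G" and vs: "valid_sched \<sigma>"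
    unfolding initial_graph_def by auto
  show "\<exists>res t k. exec \<sigma> is_connected G 0 res t k"
    using is_connected_exec_exists[OF vs G] .
  show "\<forall>res t k. exec \<sigma> is_connected G 0 res t k
          \<longrightarrow> t \<le> 200 * (card (nodes G) + card (edges G)) + 200"
    using is_connected_time[OF _ vs G] by fastforce
qed

end
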